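(* Let $n\ge 2$ and let $A_1,\ldots,A_{n+1}$ be pairwise skew $(n-1)$-spaces of $\mathrm{PG}(2n,q)$. The number of $n$-spaces of $\mathrm{PG}(2n,q)$ that intersect every $A_i$, $1\leq i\leq n+1$, is $\mathcal{O}(q^{n^2-1})$.
   Context: $\mathrm{PG}(2n,q)$ is the projective space of projective dimension $2n$ over the field of order $q$; an $i$-space is a subspace of projective dimension $i$; skew means disjoint. $\mathcal{O}(q^m)$ means bounded above by $Cq^m$ with $C$ depending only on $n$. *)

theory Defs
  imports Complex_Main "HOL-Algebra.Ring"
begin

text \<open>The vector space F^N over a field R (HOL-Algebra record), vectors as
functions nat => 'a that are zero outside the indices 0..N-1.\<close>

definition vecs :: "('a, 'm) ring_scheme \<Rightarrow> nat \<Rightarrow> (nat \<Rightarrow> 'a) set" where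
  "vecs R N = {v. (\<forall>i<N. v i \<in> carrier R) \<and> (\<forall>i\<ge>N. v i = \<zero>\<^bsub>R\<^esub>)}"

definition vzero :: "('a, 'm) ring_scheme \<Rightarrow> nat \<Rightarrow> 'a" where
  "vzero R = (\<lambda>i. \<zero>\<^bsub>R\<^esub>)"

definition vadd :: "('a, 'm) ring_scheme \<Rightarrow> (nat \<Rightarrow> 'a) \<Rightarrow> (nat \<Rightarrow> 'a) \<Rightarrow> nat \<Rightarrow> 'a" where
  "vadd R v w = (\<lambda>i. v i \<oplus>\<^bsub>R\<^esub> w i)"

definition vsmult :: "('a, 'm) ring_scheme \<Rightarrow> 'a \<Rightarrow> (nat \<Rightarrow> 'a) \<Rightarrow> nat \<Rightarrow> 'a" where
  "vsmult R a v = (\<lambda>i. a \<otimes>\<^bsub>R\<^esub> v i)"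

definition lsubspace :: "('a, 'm) ring_scheme \<Rightarrow> nat \<Rightarrow> (nat \<Rightarrow> 'a) set \<Rightarrow> bool" where
  "lsubspace R N W \<longleftrightarrow> W \<subseteq> vecs R N \<and> vzero R \<in> W \<and>
     (\<forall>v\<in>W. \<forall>w\<in>W. vadd R v w \<in> W) \<and>
     (\<forall>a\<in>carrier R. \<forall>v\<in>W. vsmult R a v \<in> W)"

definition lincomb :: "('a, 'm) ring_scheme \<Rightarrow> (nat \<Rightarrow> 'a) \<Rightarrow> (nat \<Rightarrow> 'a) list \<Rightarrow> nat \<Rightarrow> 'a" where
  "lincomb R c vs = (\<lambda>i. finsum R (\<lambda>j. c j \<otimes>\<^bsub>R\<^esub> (vs ! j) i) {..<length vs})"

definition lin_indep :: "('a, 'm) ring_scheme \<Rightarrow> (nat \<Rightarrow> 'a) list \<Rightarrow> bool" where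
  "lin_indep R vs \<longleftrightarrow> (\<forall>c. (\<forall>j<length vs. c j \<in> carrier R) \<and> lincomb R c vs = vzero R
      \<longrightarrow> (\<forall>j<length vs. c j = \<zero>\<^bsub>R\<^esub>))"

definition subspace_dim :: "('a, 'm) ring_scheme \<Rightarrow> nat \<Rightarrow> nat \<Rightarrow> (nat \<Rightarrow> 'a) set \<Rightarrow> bool" where
  "subspace_dim R N d W \<longleftrightarrow> lsubspace R N W \<and>
     (\<exists>vs. length vs = d \<and> set vs \<subseteq> W \<and> lin_indep R vs \<and>
        W = {lincomb R c vs | c. \<forall>j<length vs. c j \<in> carrier R})"

text \<open>An i-space of PG(m, q), q = |carrier R|: an (i+1)-dimensional subspace of F^(m+1).\<close>
definition proj_space :: "('a, 'm) ring_scheme \<Rightarrow> nat \<Rightarrow> nat \<Rightarrow> (nat \<Rightarrow> 'a) set \<Rightarrow> bool" where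
  "proj_space R m i W \<longleftrightarrow> subspace_dim R (Suc m) (Suc i) W"

text \<open>Projective subspaces are skew iff the vector subspaces meet only in 0.\<close>
definition skew :: "('a, 'm) ring_scheme \<Rightarrow> (nat \<Rightarrow> 'a) set \<Rightarrow> (nat \<Rightarrow> 'a) set \<Rightarrow> bool" where
  "skew R U W \<longleftrightarrow> U \<inter> W = {vzero R}"

definition meets :: "('a, 'm) ring_scheme \<Rightarrow> (nat \<Rightarrow> 'a) set \<Rightarrow> (nat \<Rightarrow> 'a) set \<Rightarrow> bool" where
  "meets R U W \<longleftrightarrow> (\<exists>v\<in>U \<inter> W. v \<noteq> vzero R)"

end

theory Submission
  imports Defs "HOL-Library.FuncSet"
begin

(* Let S be an n-space meeting every A_i, i.e. an (n+1)-dimensional subspace of F^(2n+1).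
   Greedily choose distinct indices j_1, ..., j_t and independent vectors v_k lying in S and in
   A_(j_k), until the span of v_1, ..., v_t meets each of the d = n + 1 - t remaining A_i.
   Then v belongs to the set G of t-tuples from A_(j_1), ..., A_(j_t) whose span meets those d
   subspaces. Building such a tuple one vector at a time, a vector of A_j that makes the span
   reach a new A_i is determined by its component in the span so far, because A_j and A_i are
   skew; so each of the d intersections costs a factor q and |G| = O(q^(tn - d)).
   On the other hand S is the span of each of the about q^t * q^((n+1)d) pairs formed by a
   rescaling of v and a completion of v to a basis of S; these pairs lie in G x (F^(2n+1))^d and
   distinct S give disjoint sets of pairs. Hence the number of S with a given index list is
   O(q^(tn - d + (2n+1)d - t - (n+1)d)) = O(q^(n^2 - 1)), as t + d = n + 1. *)

section \<open>Linear algebra in coordinates\<close>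

definition lspan :: "('a, 'm) ring_scheme \<Rightarrow> (nat \<Rightarrow> 'a) list \<Rightarrow> (nat \<Rightarrow> 'a) set" where
  "lspan R vs = {lincomb R c vs | c. \<forall>j<length vs. c j \<in> carrier R}"

definition rescale :: "('a, 'm) ring_scheme \<Rightarrow> (nat \<Rightarrow> 'a) \<Rightarrow> (nat \<Rightarrow> 'a) list \<Rightarrow> (nat \<Rightarrow> 'a) list" where
  "rescale R c vs = map (\<lambda>k. vsmult R (c k) (vs ! k)) [0..<length vs]"

context field
begin

lemma add_neg_eq_zero_iff: "a \<in> carrier R \<Longrightarrow> b \<in> carrier R \<Longrightarrow> a \<oplus> \<ominus> b = \<zero> \<longleftrightarrow> a = b"
  using minus_equality[of a "\<ominus> b"] by (auto simp: r_neg)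

lemma vecs_carrier: "v \<in> vecs R N \<Longrightarrow> v i \<in> carrier R"
  unfolding vecs_def by (cases "i < N") auto

lemma vecs_zero_beyond: "v \<in> vecs R N \<Longrightarrow> N \<le> i \<Longrightarrow> v i = \<zero>"
  unfolding vecs_def by auto

lemma vecsI: "(\<And>i. i < N \<Longrightarrow> v i \<in> carrier R) \<Longrightarrow> (\<And>i. N \<le> i \<Longrightarrow> v i = \<zero>) \<Longrightarrow> v \<in> vecs R N"
  unfolding vecs_def by auto

lemma vecs_nth_carrier: "set vs \<subseteq> vecs R N \<Longrightarrow> j < length vs \<Longrightarrow> (vs ! j) i \<in> carrier R"
  using vecs_carrier nth_mem by blast

lemma vsmult_one: "v \<in> vecs R N \<Longrightarrow> vsmult R \<one> v = v"
  unfolding vsmult_def using vecs_carrier[of v N] by (intro ext) simp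

lemma vsmult_right_cancel:
  assumes "v \<in> vecs R N" "v \<noteq> vzero R" "a \<in> carrier R" "b \<in> carrier R" "vsmult R a v = vsmult R b v"
  shows "a = b"
proof -
  obtain i where i: "v i \<noteq> \<zero>" using assms(2) unfolding vzero_def by auto
  have "a \<otimes> v i = b \<otimes> v i" using fun_cong[OF assms(5), of i] unfolding vsmult_def .
  then show ?thesis using m_rcancel[OF i vecs_carrier[OF assms(1)] assms(3,4)] by simp
qed

lemma vecs_eq_if_diff_zero:
  assumes v: "v \<in> vecs R N" and w: "w \<in> vecs R N" and diff: "vadd R v (vsmult R (\<ominus> \<one>) w) = vzero R"
  shows "v = w"
proof (rule ext)
  fix i
  have "v i \<oplus> \<ominus> \<one> \<otimes> w i = \<zero>" using fun_cong[OF diff, of i] unfolding vadd_def vsmult_def vzero_def .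
  then show "v i = w i" using vecs_carrier[OF v] vecs_carrier[OF w] by (simp add: l_minus add_neg_eq_zero_iff)
qed

lemma vecs_eq_image_PiE: "vecs R N = (\<lambda>f i. if i < N then f i else \<zero>) ` (PiE {..<N} (\<lambda>_. carrier R))"
proof (intro equalityI subsetI)
  fix v assume v: "v \<in> vecs R N"
  have "v = (\<lambda>i. if i < N then restrict v {..<N} i else \<zero>)"
    using vecs_zero_beyond[OF v] by (intro ext) auto
  moreover have "restrict v {..<N} \<in> PiE {..<N} (\<lambda>_. carrier R)" using vecs_carrier[OF v] by auto
  ultimately show "v \<in> (\<lambda>f i. if i < N then f i else \<zero>) ` (PiE {..<N} (\<lambda>_. carrier R))" by blast
next
  fix v assume "v \<in> (\<lambda>f i. if i < N then f i else \<zero>) ` (PiE {..<N} (\<lambda>_. carrier R))"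
  then obtain f where "f \<in> PiE {..<N} (\<lambda>_. carrier R)" "v = (\<lambda>i. if i < N then f i else \<zero>)" by blast
  then show "v \<in> vecs R N" by (intro vecsI) auto
qed

lemma finite_vecs: "finite (carrier R) \<Longrightarrow> finite (vecs R N)"
  using vecs_eq_image_PiE by (simp add: finite_PiE)

lemma card_vecs_le: "finite (carrier R) \<Longrightarrow> card (vecs R N) \<le> card (carrier R) ^ N"
  using card_image_le[of "PiE {..<N} (\<lambda>_. carrier R)" "\<lambda>f i. if i < N then f i else \<zero>"]
  by (simp add: vecs_eq_image_PiE[of N] finite_PiE card_PiE)

lemma lincomb_summand_Pi:
  "\<forall>j<length vs. c j \<in> carrier R \<Longrightarrow> set vs \<subseteq> vecs R N \<Longrightarrow>
   (\<lambda>j. c j \<otimes> (vs ! j) i) \<in> {..<length vs} \<rightarrow> carrier R"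
  using vecs_nth_carrier by (auto simp: Pi_def)

lemma lincomb_carrier:
  "\<forall>j<length vs. c j \<in> carrier R \<Longrightarrow> set vs \<subseteq> vecs R N \<Longrightarrow> lincomb R c vs i \<in> carrier R"
  unfolding lincomb_def by (intro finsum_closed lincomb_summand_Pi) auto

lemma lincomb_vecs:
  assumes c: "\<forall>j<length vs. c j \<in> carrier R" and vs: "set vs \<subseteq> vecs R N"
  shows "lincomb R c vs \<in> vecs R N"
proof (rule vecsI)
  fix i assume "N \<le> i"
  then have "lincomb R c vs i = (\<Oplus>j\<in>{..<length vs}. \<zero>)"
    unfolding lincomb_def
    using c vs by (intro finsum_cong') (auto simp: Pi_def vecs_zero_beyond[OF subsetD[OF vs nth_mem]])
  then show "lincomb R c vs i = \<zero>" by simp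
qed (rule lincomb_carrier[OF c vs])

lemma lincomb_cong:
  "(\<And>j. j < length vs \<Longrightarrow> c j = d j) \<Longrightarrow> \<forall>j<length vs. c j \<in> carrier R \<Longrightarrow> set vs \<subseteq> vecs R N
   \<Longrightarrow> lincomb R c vs = lincomb R d vs"
  unfolding lincomb_def by (intro ext finsum_cong') (auto simp: Pi_def intro!: vecs_nth_carrier)

lemma lincomb_Nil: "lincomb R c [] = vzero R"
  unfolding lincomb_def vzero_def by simp

lemma lincomb_zero: "set vs \<subseteq> vecs R N \<Longrightarrow> lincomb R (\<lambda>j. \<zero>) vs = vzero R"
  unfolding lincomb_def vzero_def
  by (rule ext, rule trans[OF finsum_cong'[of _ _ "\<lambda>j. \<zero>"]]) (auto simp: vecs_nth_carrier)

lemma lincomb_snoc: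
  assumes "\<forall>j<Suc (length vs). c j \<in> carrier R" "set vs \<subseteq> vecs R N" "x \<in> vecs R N"
  shows "lincomb R c (vs @ [x]) = vadd R (lincomb R c vs) (vsmult R (c (length vs)) x)"
proof (rule ext)
  fix i
  have c: "\<forall>j<length vs. c j \<in> carrier R" using assms(1) by auto
  have "lincomb R c (vs @ [x]) i = (\<Oplus>j\<in>insert (length vs) {..<length vs}. c j \<otimes> ((vs @ [x]) ! j) i)"
    unfolding lincomb_def by (simp add: lessThan_Suc)
  also have "\<dots> = c (length vs) \<otimes> x i \<oplus> (\<Oplus>j\<in>{..<length vs}. c j \<otimes> ((vs @ [x]) ! j) i)"
    using assms vecs_nth_carrier[of "vs @ [x]"] by (subst finsum_insert) (auto simp: Pi_def vecs_carrier)
  also have "(\<Oplus>j\<in>{..<length vs}. c j \<otimes> ((vs @ [x]) ! j) i) = lincomb R c vs i"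
    unfolding lincomb_def
    by (rule finsum_cong') (use lincomb_summand_Pi[OF c assms(2)] in \<open>auto simp: nth_append\<close>)
  finally show "lincomb R c (vs @ [x]) i = vadd R (lincomb R c vs) (vsmult R (c (length vs)) x) i"
    unfolding vadd_def vsmult_def using lincomb_carrier[OF c assms(2)] assms(1) vecs_carrier[OF assms(3)]
    by (simp add: a_comm)
qed

lemma lincomb_add:
  assumes "\<forall>j<length vs. c j \<in> carrier R" "\<forall>j<length vs. d j \<in> carrier R" "set vs \<subseteq> vecs R N"
  shows "lincomb R (\<lambda>j. c j \<oplus> d j) vs = vadd R (lincomb R c vs) (lincomb R d vs)"
proof (rule ext)
  fix i
  have "lincomb R (\<lambda>j. c j \<oplus> d j) vs i = (\<Oplus>j\<in>{..<length vs}. c j \<otimes> (vs ! j) i \<oplus> d j \<otimes> (vs ! j) i)"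
    unfolding lincomb_def by (rule finsum_cong') (use assms vecs_nth_carrier in \<open>auto simp: l_distr Pi_def\<close>)
  also have "\<dots> = lincomb R c vs i \<oplus> lincomb R d vs i"
    unfolding lincomb_def by (rule finsum_addf) (use lincomb_summand_Pi assms in auto)
  finally show "lincomb R (\<lambda>j. c j \<oplus> d j) vs i = vadd R (lincomb R c vs) (lincomb R d vs) i"
    unfolding vadd_def .
qed

lemma lincomb_smult:
  assumes "\<forall>j<length vs. c j \<in> carrier R" "a \<in> carrier R" "set vs \<subseteq> vecs R N"
  shows "lincomb R (\<lambda>j. a \<otimes> c j) vs = vsmult R a (lincomb R c vs)"
proof (rule ext)
  fix i
  have "lincomb R (\<lambda>j. a \<otimes> c j) vs i = (\<Oplus>j\<in>{..<length vs}. a \<otimes> (c j \<otimes> (vs ! j) i))"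
    unfolding lincomb_def by (rule finsum_cong') (use assms vecs_nth_carrier in \<open>auto simp: m_assoc Pi_def\<close>)
  also have "\<dots> = a \<otimes> lincomb R c vs i"
    unfolding lincomb_def by (rule finsum_rdistr[symmetric]) (use lincomb_summand_Pi assms in auto)
  finally show "lincomb R (\<lambda>j. a \<otimes> c j) vs i = vsmult R a (lincomb R c vs) i"
    unfolding vsmult_def .
qed

lemma lin_indepI:
  "(\<And>c. \<forall>j<length vs. c j \<in> carrier R \<Longrightarrow> lincomb R c vs = vzero R \<Longrightarrow> \<forall>j<length vs. c j = \<zero>)
   \<Longrightarrow> lin_indep R vs"
  unfolding lin_indep_def by blast

lemma lin_indepD:
  assumes "lin_indep R vs" "\<forall>j<length vs. c j \<in> carrier R" "lincomb R c vs = vzero R" "j < length vs"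
  shows "c j = \<zero>"
  using assms(1)[unfolded lin_indep_def, THEN spec[of _ c]] assms(2-4) by blast

lemma lin_indep_lincomb_inj:
  assumes indep: "lin_indep R vs" and vs: "set vs \<subseteq> vecs R N"
    and c: "\<forall>j<length vs. c j \<in> carrier R" and d: "\<forall>j<length vs. d j \<in> carrier R"
    and eq: "lincomb R c vs = lincomb R d vs" and j: "j < length vs"
  shows "c j = d j"
proof -
  have d': "\<forall>j<length vs. \<ominus> \<one> \<otimes> d j \<in> carrier R" using d by auto
  have cd: "\<forall>j<length vs. c j \<oplus> \<ominus> \<one> \<otimes> d j \<in> carrier R" using c d by auto
  have "lincomb R (\<lambda>j. c j \<oplus> \<ominus> \<one> \<otimes> d j) vs = vadd R (lincomb R d vs) (vsmult R (\<ominus> \<one>) (lincomb R d vs))"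
    using lincomb_add[OF c d' vs] lincomb_smult[OF d _ vs, of "\<ominus> \<one>"] eq by simp
  also have "\<dots> = vzero R"
  proof (rule ext)
    fix i
    have "lincomb R d vs i \<in> carrier R" by (rule lincomb_carrier[OF d vs])
    then show "vadd R (lincomb R d vs) (vsmult R (\<ominus> \<one>) (lincomb R d vs)) i = vzero R i"
      unfolding vadd_def vsmult_def vzero_def by algebra
  qed
  finally have "c j \<oplus> \<ominus> \<one> \<otimes> d j = \<zero>" by (rule lin_indepD[OF indep cd _ j])
  then show ?thesis using c d j by (simp add: l_minus add_neg_eq_zero_iff)
qed

lemma lincomb_unit_coeff:
  assumes vs: "set vs \<subseteq> vecs R N" and k: "k < length vs"
  shows "lincomb R (\<lambda>j. if j = k then \<one> else \<zero>) vs = vs ! k"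
proof (rule ext)
  fix i
  have "lincomb R (\<lambda>j. if j = k then \<one> else \<zero>) vs i = (\<Oplus>j\<in>{..<length vs}. if k = j then (vs ! j) i else \<zero>)"
    unfolding lincomb_def using vecs_nth_carrier[OF vs] by (intro finsum_cong') (auto simp: Pi_def)
  also have "\<dots> = (vs ! k) i"
    using k vecs_nth_carrier[OF vs] by (intro finsum_singleton) (auto simp: Pi_def)
  finally show "lincomb R (\<lambda>j. if j = k then \<one> else \<zero>) vs i = (vs ! k) i" .
qed

lemma lin_indep_nth_nonzero:
  assumes indep: "lin_indep R vs" and vs: "set vs \<subseteq> vecs R N" and k: "k < length vs"
  shows "vs ! k \<noteq> vzero R"
proof
  let ?c = "\<lambda>j. if j = k then \<one> else \<zero>"
  assume "vs ! k = vzero R"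
  then have "lincomb R ?c vs = vzero R" using lincomb_unit_coeff[OF vs k] by simp
  moreover have "\<forall>j<length vs. ?c j \<in> carrier R" by simp
  ultimately have "?c k = \<zero>" using lin_indepD[OF indep _ _ k, of ?c] by blast
  then show False by simp
qed

lemma lsubspace_vecs: "lsubspace R N W \<Longrightarrow> W \<subseteq> vecs R N"
  unfolding lsubspace_def by auto

lemma lspan_vecs: "set vs \<subseteq> vecs R N \<Longrightarrow> lspan R vs \<subseteq> vecs R N"
  unfolding lspan_def using lincomb_vecs by blast

lemma lsubspace_lspan:
  assumes vs: "set vs \<subseteq> vecs R N"
  shows "lsubspace R N (lspan R vs)"
  unfolding lsubspace_def
proof (intro conjI ballI)
  show "vzero R \<in> lspan R vs" unfolding lspan_def using lincomb_zero[OF vs] by force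
next
  fix v w assume "v \<in> lspan R vs" "w \<in> lspan R vs"
  then obtain c d where c: "v = lincomb R c vs" "\<forall>j<length vs. c j \<in> carrier R"
    and d: "w = lincomb R d vs" "\<forall>j<length vs. d j \<in> carrier R" unfolding lspan_def by auto
  then have "vadd R v w = lincomb R (\<lambda>j. c j \<oplus> d j) vs" using lincomb_add[OF c(2) d(2) vs] by simp
  then show "vadd R v w \<in> lspan R vs" unfolding lspan_def using c(2) d(2) by auto
next
  fix a v assume a: "a \<in> carrier R" and "v \<in> lspan R vs"
  then obtain c where c: "v = lincomb R c vs" "\<forall>j<length vs. c j \<in> carrier R" unfolding lspan_def by auto
  then have "vsmult R a v = lincomb R (\<lambda>j. a \<otimes> c j) vs" using lincomb_smult[OF c(2) a vs] by simp
  then show "vsmult R a v \<in> lspan R vs" unfolding lspan_def using a c(2) by auto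
qed (rule lspan_vecs[OF vs])

lemma lincomb_in_lsubspace:
  assumes W: "lsubspace R N W"
  shows "set vs \<subseteq> W \<Longrightarrow> \<forall>j<length vs. c j \<in> carrier R \<Longrightarrow> lincomb R c vs \<in> W"
proof (induction vs rule: rev_induct)
  case Nil
  then show ?case using W unfolding lsubspace_def by (simp add: lincomb_Nil)
next
  case (snoc x xs)
  have "lincomb R c (xs @ [x]) = vadd R (lincomb R c xs) (vsmult R (c (length xs)) x)"
    using snoc.prems lsubspace_vecs[OF W] by (intro lincomb_snoc) auto
  moreover have "lincomb R c xs \<in> W" using snoc by auto
  moreover have "vsmult R (c (length xs)) x \<in> W" using snoc.prems W unfolding lsubspace_def by auto
  ultimately show ?case using W unfolding lsubspace_def by auto
qed

lemma lspan_subset: "lsubspace R N W \<Longrightarrow> set vs \<subseteq> W \<Longrightarrow> lspan R vs \<subseteq> W"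
  unfolding lspan_def using lincomb_in_lsubspace by blast

lemma set_subset_lspan:
  assumes vs: "set vs \<subseteq> vecs R N"
  shows "set vs \<subseteq> lspan R vs"
proof
  fix v assume "v \<in> set vs"
  then obtain k where "k < length vs" "v = vs ! k" by (auto simp: in_set_conv_nth)
  then have "v = lincomb R (\<lambda>j. if j = k then \<one> else \<zero>) vs" using lincomb_unit_coeff[OF vs] by simp
  then show "v \<in> lspan R vs" unfolding lspan_def by force
qed

lemma lspan_eq_image_PiE:
  "set vs \<subseteq> vecs R N \<Longrightarrow> lspan R vs = (\<lambda>c. lincomb R c vs) ` (PiE {..<length vs} (\<lambda>_. carrier R))"
proof (intro equalityI subsetI)
  fix v assume vs: "set vs \<subseteq> vecs R N" and "v \<in> lspan R vs"
  then obtain c where c: "v = lincomb R c vs" "\<forall>j<length vs. c j \<in> carrier R" unfolding lspan_def by auto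
  then have "v = lincomb R (restrict c {..<length vs}) vs" using vs by (auto intro!: lincomb_cong)
  moreover have "restrict c {..<length vs} \<in> PiE {..<length vs} (\<lambda>_. carrier R)" using c by auto
  ultimately show "v \<in> (\<lambda>c. lincomb R c vs) ` (PiE {..<length vs} (\<lambda>_. carrier R))" by blast
qed (auto simp: lspan_def PiE_def Pi_def)

lemma finite_lspan: "finite (carrier R) \<Longrightarrow> set vs \<subseteq> vecs R N \<Longrightarrow> finite (lspan R vs)"
  using lspan_eq_image_PiE by (simp add: finite_PiE)

lemma card_lspan_le:
  "finite (carrier R) \<Longrightarrow> set vs \<subseteq> vecs R N \<Longrightarrow> card (lspan R vs) \<le> card (carrier R) ^ length vs"
  using card_image_le[of "PiE {..<length vs} (\<lambda>_. carrier R)" "\<lambda>c. lincomb R c vs"]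
  by (simp add: lspan_eq_image_PiE finite_PiE card_PiE)

lemma card_lspan_lin_indep:
  assumes fin: "finite (carrier R)" and vs: "set vs \<subseteq> vecs R N" and indep: "lin_indep R vs"
  shows "card (lspan R vs) = card (carrier R) ^ length vs"
proof -
  have "inj_on (\<lambda>c. lincomb R c vs) (PiE {..<length vs} (\<lambda>_. carrier R))"
    by (intro inj_onI PiE_ext) (auto intro!: lin_indep_lincomb_inj[OF indep vs] simp: PiE_def Pi_def)
  then show ?thesis by (simp add: lspan_eq_image_PiE[OF vs] card_image card_PiE)
qed

lemma lspan_eq_if_lin_indep_subset:
  assumes fin: "finite (carrier R)" and bs: "set bs \<subseteq> vecs R N" "lin_indep R bs"
    and vs: "set vs \<subseteq> lspan R bs" "lin_indep R vs" "length vs = length bs"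
  shows "lspan R vs = lspan R bs"
proof (rule card_subset_eq[OF finite_lspan[OF fin bs(1)]])
  show "lspan R vs \<subseteq> lspan R bs" by (rule lspan_subset[OF lsubspace_lspan[OF bs(1)] vs(1)])
  have "set vs \<subseteq> vecs R N" using vs(1) lspan_vecs[OF bs(1)] by blast
  then show "card (lspan R vs) = card (lspan R bs)"
    by (simp add: card_lspan_lin_indep[OF fin _ vs(2)] card_lspan_lin_indep[OF fin bs] vs(3))
qed

lemma vadd_vsmult_zero: "u \<in> vecs R N \<Longrightarrow> x \<in> vecs R N \<Longrightarrow> vadd R u (vsmult R \<zero> x) = u"
  unfolding vadd_def vsmult_def by (intro ext) (simp add: vecs_carrier)

lemma mem_join_if_combination:
  assumes W: "lsubspace R N W" and C: "lsubspace R N C" and u: "u \<in> W" and x: "x \<in> vecs R N"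
    and a: "a \<in> carrier R" "a \<noteq> \<zero>" and w: "vadd R u (vsmult R a x) \<in> C"
  shows "\<exists>u'\<in>W. \<exists>c\<in>C. x = vadd R u' c"
proof -
  have ia: "inv a \<in> carrier R" "inv a \<otimes> a = \<one>" using a field_Units by auto
  have u_vecs: "u \<in> vecs R N" using u lsubspace_vecs[OF W] by blast
  have "x = vadd R (vsmult R (\<ominus> (inv a)) u) (vsmult R (inv a) (vadd R u (vsmult R a x)))"
  proof (rule ext)
    fix i
    have ui: "u i \<in> carrier R" and xi: "x i \<in> carrier R" using vecs_carrier u_vecs x by auto
    have "inv a \<otimes> (u i \<oplus> a \<otimes> x i) = inv a \<otimes> u i \<oplus> x i"
      using ia a ui xi by (simp add: r_distr m_assoc[symmetric])
    then show "x i = vadd R (vsmult R (\<ominus> (inv a)) u) (vsmult R (inv a) (vadd R u (vsmult R a x))) i"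
      unfolding vadd_def vsmult_def using ia ui xi by (simp add: l_minus a_assoc[symmetric] l_neg)
  qed
  moreover have "vsmult R (\<ominus> (inv a)) u \<in> W" using W u ia unfolding lsubspace_def by auto
  moreover have "vsmult R (inv a) (vadd R u (vsmult R a x)) \<in> C" using C w ia unfolding lsubspace_def by auto
  ultimately show ?thesis by blast
qed

lemma lspan_snocE:
  assumes vs: "set vs \<subseteq> vecs R N" and x: "x \<in> vecs R N" and w: "w \<in> lspan R (vs @ [x])"
  obtains u a where "u \<in> lspan R vs" "a \<in> carrier R" "w = vadd R u (vsmult R a x)"
proof -
  obtain e where e: "w = lincomb R e (vs @ [x])" "\<forall>j<Suc (length vs). e j \<in> carrier R"
    using w unfolding lspan_def by auto
  have "lincomb R e vs \<in> lspan R vs" unfolding lspan_def using e(2) by auto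
  moreover have "w = vadd R (lincomb R e vs) (vsmult R (e (length vs)) x)"
    using e lincomb_snoc[OF e(2) vs x] by simp
  ultimately show thesis using e(2) by (intro that) auto
qed

lemma lin_indep_snoc:
  assumes indep: "lin_indep R vs" and vs: "set vs \<subseteq> vecs R N" and x: "x \<in> vecs R N"
    and x_notin: "x \<notin> lspan R vs"
  shows "lin_indep R (vs @ [x])"
proof (rule lin_indepI)
  fix c assume c: "\<forall>j<length (vs @ [x]). c j \<in> carrier R" and zero: "lincomb R c (vs @ [x]) = vzero R"
  let ?a = "c (length vs)" and ?u = "lincomb R c vs"
  have cv: "\<forall>j<length vs. c j \<in> carrier R" and a: "?a \<in> carrier R" using c by auto
  have span: "lsubspace R N (lspan R vs)" by (rule lsubspace_lspan[OF vs])
  have u: "?u \<in> lspan R vs" unfolding lspan_def using cv by blast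
  have eq: "vadd R ?u (vsmult R ?a x) = vzero R" using zero lincomb_snoc[of vs c N x] c vs x by simp
  have a0: "?a = \<zero>"
  proof (rule ccontr)
    assume "?a \<noteq> \<zero>"
    moreover have "vzero R \<in> lspan R vs" using span unfolding lsubspace_def by blast
    ultimately obtain u' c' where "u' \<in> lspan R vs" "c' \<in> lspan R vs" "x = vadd R u' c'"
      using mem_join_if_combination[OF span span u x a] eq by auto
    then have "x \<in> lspan R vs" using span unfolding lsubspace_def by blast
    then show False using x_notin by simp
  qed
  then have "?u = vzero R" using eq vadd_vsmult_zero[OF _ x] u lspan_vecs[OF vs] by auto
  then have "\<forall>j<length vs. c j = \<zero>" using lin_indepD[OF indep cv] by blast
  then show "\<forall>j<length (vs @ [x]). c j = \<zero>" using a0 by (auto simp: less_Suc_eq)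
qed

lemma card_lspan_Diff_ge:
  assumes fin: "finite (carrier R)" and bs: "set bs \<subseteq> vecs R N" "lin_indep R bs"
    and ws: "set ws \<subseteq> vecs R N" "length ws < length bs"
  shows "card (carrier R) ^ length bs - card (carrier R) ^ (length bs - 1) \<le> card (lspan R bs - lspan R ws)"
proof -
  have "card (carrier R) \<ge> 1" using fin carrier_not_empty by (simp add: Suc_le_eq card_gt_0_iff)
  then have "card (lspan R ws) \<le> card (carrier R) ^ (length bs - 1)"
    using card_lspan_le[OF fin ws(1)] power_increasing[of "length ws" "length bs - 1"] ws(2) by fastforce
  moreover have "card (lspan R bs) - card (lspan R ws) \<le> card (lspan R bs - lspan R ws)"
    using finite_lspan[OF fin ws(1)] by (rule diff_card_le_card_Diff)
  ultimately show ?thesis using card_lspan_lin_indep[OF fin bs] by linarith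
qed

lemma card_lin_indep_extensions_ge:
  assumes fin: "finite (carrier R)" and bs: "set bs \<subseteq> vecs R N" "lin_indep R bs"
    and vs: "set vs \<subseteq> lspan R bs" "lin_indep R vs"
  shows "k + length vs \<le> length bs \<Longrightarrow>
    (card (carrier R) ^ length bs - card (carrier R) ^ (length bs - 1)) ^ k
      \<le> card {ws. length ws = k \<and> set ws \<subseteq> lspan R bs \<and> lin_indep R (vs @ ws)}"
proof (induction k)
  case 0
  have "{ws. length ws = 0 \<and> set ws \<subseteq> lspan R bs \<and> lin_indep R (vs @ ws)} = {[]}" using vs by auto
  then show ?case by simp
next
  case (Suc k)
  let ?q = "card (carrier R)" and ?S = "lspan R bs"
  let ?D = "?q ^ length bs - ?q ^ (length bs - 1)"
  let ?W = "\<lambda>k. {ws. length ws = k \<and> set ws \<subseteq> ?S \<and> lin_indep R (vs @ ws)}"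
  let ?snoc = "\<lambda>(ws, x). ws @ [x :: nat \<Rightarrow> 'a]"
  let ?ext = "SIGMA ws:?W k. ?S - lspan R (vs @ ws)"
  have S_fin: "finite ?S" and S_vecs: "?S \<subseteq> vecs R N" using finite_lspan[OF fin bs(1)] lspan_vecs[OF bs(1)] .
  have W_fin: "finite (?W j)" for j
    by (rule finite_subset[OF _ finite_lists_length_eq[OF S_fin, of j]]) auto
  have room: "?D \<le> card (?S - lspan R (vs @ ws))" if ws: "ws \<in> ?W k" for ws
    using ws vs(1) S_vecs Suc.prems by (intro card_lspan_Diff_ge[OF fin bs]) auto
  have ext_subset: "?snoc ` ?ext \<subseteq> ?W (Suc k)"
  proof
    fix y assume "y \<in> ?snoc ` ?ext"
    then obtain ws x where wx: "ws \<in> ?W k" "x \<in> ?S" "x \<notin> lspan R (vs @ ws)" "y = ws @ [x]" by auto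
    have "set (vs @ ws) \<subseteq> vecs R N" using wx(1) vs(1) S_vecs by auto
    then have "lin_indep R ((vs @ ws) @ [x])"
      using lin_indep_snoc[OF _ _ _ wx(3)] wx(1,2) S_vecs by auto
    then show "y \<in> ?W (Suc k)" using wx by auto
  qed
  have "?D ^ k * ?D \<le> card (?W k) * ?D" using Suc by simp
  also have "\<dots> \<le> (\<Sum>ws\<in>?W k. card (?S - lspan R (vs @ ws)))"
    using room sum_mono[of "?W k" "\<lambda>_. ?D"] by (simp add: mult.commute)
  also have "\<dots> = card ?ext" using W_fin S_fin by (intro card_SigmaI[symmetric]) auto
  also have "\<dots> = card (?snoc ` ?ext)" by (intro card_image[symmetric] inj_onI) auto
  also have "\<dots> \<le> card (?W (Suc k))" using ext_subset W_fin by (intro card_mono) auto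
  finally show ?case by (simp add: mult.commute)
qed

lemma length_rescale [simp]: "length (rescale R c vs) = length vs"
  unfolding rescale_def by simp

lemma nth_rescale [simp]: "k < length vs \<Longrightarrow> rescale R c vs ! k = vsmult R (c k) (vs ! k)"
  unfolding rescale_def by simp

lemma lincomb_rescale:
  assumes "\<forall>j<length vs. e j \<in> carrier R" "\<forall>j<length vs. c j \<in> carrier R" "set vs \<subseteq> vecs R N"
  shows "lincomb R e (rescale R c vs) = lincomb R (\<lambda>j. e j \<otimes> c j) vs"
  unfolding lincomb_def length_rescale
  using assms vecs_nth_carrier[OF assms(3)]
  by (intro ext finsum_cong') (auto simp: vsmult_def m_assoc Pi_def)

lemma lin_indep_rescale:
  assumes indep: "lin_indep R vs" and vs: "set vs \<subseteq> vecs R N"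
    and c: "\<forall>j<length vs. c j \<in> carrier R - {\<zero>}"
  shows "lin_indep R (rescale R c vs)"
proof (rule lin_indepI)
  fix e assume e: "\<forall>j<length (rescale R c vs). e j \<in> carrier R"
    and zero: "lincomb R e (rescale R c vs) = vzero R"
  have "lincomb R (\<lambda>j. e j \<otimes> c j) vs = vzero R" using zero e c lincomb_rescale[OF _ _ vs] by simp
  then have "\<forall>j<length vs. e j \<otimes> c j = \<zero>"
    using lin_indepD[OF indep, of "\<lambda>j. e j \<otimes> c j"] e c by simp
  then show "\<forall>j<length (rescale R c vs). e j = \<zero>" using e c integral_iff by auto
qed

lemma lspan_rescale:
  assumes fin: "finite (carrier R)" and indep: "lin_indep R vs" and vs: "set vs \<subseteq> vecs R N"
    and c: "\<forall>j<length vs. c j \<in> carrier R - {\<zero>}"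
  shows "lspan R (rescale R c vs) = lspan R vs"
proof (rule lspan_eq_if_lin_indep_subset[OF fin vs indep])
  show "set (rescale R c vs) \<subseteq> lspan R vs"
  proof
    fix y assume "y \<in> set (rescale R c vs)"
    then obtain k where k: "k < length vs" "y = vsmult R (c k) (vs ! k)" by (auto simp: in_set_conv_nth)
    then have "vs ! k \<in> lspan R vs" using set_subset_lspan[OF vs] nth_mem by blast
    then show "y \<in> lspan R vs" using lsubspace_lspan[OF vs] c k unfolding lsubspace_def by auto
  qed
qed (use lin_indep_rescale[OF indep vs c] in auto)

lemma rescale_append_one:
  assumes "set ws \<subseteq> vecs R N"
  shows "rescale R (\<lambda>k. if k < length vs then c k else \<one>) (vs @ ws) = rescale R c vs @ ws"
proof (rule nth_equalityI)
  fix i assume i: "i < length (rescale R (\<lambda>k. if k < length vs then c k else \<one>) (vs @ ws))"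
  show "rescale R (\<lambda>k. if k < length vs then c k else \<one>) (vs @ ws) ! i = (rescale R c vs @ ws) ! i"
  proof (cases "i < length vs")
    case False
    then have "ws ! (i - length vs) \<in> vecs R N" using i assms by auto
    then show ?thesis using i False by (simp add: nth_append vsmult_one)
  qed (use i in \<open>simp add: nth_append\<close>)
qed simp

lemma lspan_rescale_append:
  assumes fin: "finite (carrier R)" and bs: "set bs \<subseteq> vecs R N" "lin_indep R bs"
    and vws: "set (vs @ ws) \<subseteq> lspan R bs" "lin_indep R (vs @ ws)" "length (vs @ ws) = length bs"
    and c: "\<forall>k<length vs. c k \<in> carrier R - {\<zero>}"
  shows "lspan R (rescale R c vs @ ws) = lspan R bs"
proof -
  let ?c = "\<lambda>k. if k < length vs then c k else \<one>"
  have vws_vecs: "set (vs @ ws) \<subseteq> vecs R N" using vws(1) lspan_vecs[OF bs(1)] by blast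
  have c': "\<forall>k<length (vs @ ws). ?c k \<in> carrier R - {\<zero>}" using c by auto
  have "rescale R c vs @ ws = rescale R ?c (vs @ ws)" using vws_vecs rescale_append_one[of ws N vs c] by simp
  also have "lspan R \<dots> = lspan R (vs @ ws)" by (rule lspan_rescale[OF fin vws(2) vws_vecs c'])
  also have "\<dots> = lspan R bs" by (rule lspan_eq_if_lin_indep_subset[OF fin bs vws])
  finally show ?thesis .
qed

lemma inj_on_rescale:
  assumes indep: "lin_indep R vs" and vs: "set vs \<subseteq> vecs R N"
  shows "inj_on (\<lambda>c. rescale R c vs) (PiE {..<length vs} (\<lambda>_. carrier R - {\<zero>}))"
proof (rule inj_onI)
  fix c c' assume c: "c \<in> PiE {..<length vs} (\<lambda>_. carrier R - {\<zero>})"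
    and c': "c' \<in> PiE {..<length vs} (\<lambda>_. carrier R - {\<zero>})" and eq: "rescale R c vs = rescale R c' vs"
  show "c = c'"
  proof (rule PiE_ext[OF c c'])
    fix k assume k: "k \<in> {..<length vs}"
    then have "vsmult R (c k) (vs ! k) = vsmult R (c' k) (vs ! k)" using arg_cong[OF eq, of "\<lambda>xs. xs ! k"] by simp
    then show "c k = c' k"
      using k c c' vs lin_indep_nth_nonzero[OF indep vs] by (intro vsmult_right_cancel[of "vs ! k" N]) auto
  qed
qed

end

section \<open>Tuples whose span meets prescribed subspaces\<close>

definition meeting_tuples ::
    "('a, 'm) ring_scheme \<Rightarrow> (nat \<Rightarrow> (nat \<Rightarrow> 'a) set) \<Rightarrow> nat list \<Rightarrow> nat set \<Rightarrow> (nat \<Rightarrow> 'a) list set" where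
  "meeting_tuples R A js I =
     {vs. list_all2 (\<lambda>v j. v \<in> A j) vs js \<and> (\<forall>i\<in>I. meets R (lspan R vs) (A i))}"

definition join_points ::
    "('a, 'm) ring_scheme \<Rightarrow> (nat \<Rightarrow> 'a) set \<Rightarrow> (nat \<Rightarrow> 'a) set \<Rightarrow> (nat \<Rightarrow> 'a) list \<Rightarrow> (nat \<Rightarrow> 'a) set" where
  "join_points R B C vs = {x \<in> B. \<exists>u\<in>lspan R vs. \<exists>c\<in>C. x = vadd R u c}"

lemma card_image_Sigma_le:
  assumes "finite A" "\<forall>x\<in>A. finite (B x) \<and> card (B x) \<le> b"
  shows "card (f ` Sigma A B) \<le> card A * b"
proof -
  have "card (f ` Sigma A B) \<le> card (Sigma A B)"
    using assms by (intro card_image_le) auto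
  also have "\<dots> = (\<Sum>x\<in>A. card (B x))" using assms by (intro card_SigmaI) auto
  also have "\<dots> \<le> card A * b" using assms sum_bounded_above[of A "\<lambda>x. card (B x)" b] by auto
  finally show ?thesis .
qed

lemma list_all2_mem_set_subset:
  "list_all2 (\<lambda>v j. v \<in> A j) vs js \<Longrightarrow> \<forall>j\<in>set js. A j \<subseteq> X \<Longrightarrow> set vs \<subseteq> X"
  by (induction rule: list_all2_induct) auto

lemma count_step_arith:
  fixes g :: "'b set \<Rightarrow> nat" and q a l m x :: nat
  assumes I: "finite I" "l + 1 + card I \<le> m + 1" and q: "q \<ge> 1" and a: "a \<le> q ^ m"
    and IH: "\<And>I'. I' \<subseteq> I \<Longrightarrow> g I' * q ^ card I' \<le> (2 ^ (m + 1) * (m + 2)) ^ l * q ^ (l * m)"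
    and x: "x \<le> g I * a + (\<Sum>I'\<in>Pow I. \<Sum>i\<in>I - I'. g I' * q ^ l)"
  shows "x * q ^ card I \<le> (2 ^ (m + 1) * (m + 2)) ^ (l + 1) * q ^ ((l + 1) * m)"
proof -
  let ?K = "(2::nat) ^ (m + 1) * (m + 2)"
  let ?B = "?K ^ l * q ^ (l * m + m)"
  have old: "g I * a * q ^ card I \<le> ?B"
  proof -
    have "g I * a * q ^ card I \<le> (g I * q ^ card I) * q ^ m" using a by (simp add: algebra_simps)
    also have "\<dots> \<le> ?K ^ l * q ^ (l * m) * q ^ m" using IH[of I] by simp
    finally show ?thesis by (simp add: power_add algebra_simps)
  qed
  have new: "(\<Sum>i\<in>I - I'. g I' * q ^ l * q ^ card I) \<le> card I * ?B" if I': "I' \<subseteq> I" for I'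
  proof -
    have "g I' * q ^ l * q ^ card I = (g I' * q ^ card I') * q ^ (l + (card I - card I'))"
      using card_mono[OF I(1) I'] by (simp add: power_add[symmetric] algebra_simps)
    also have "\<dots> \<le> (?K ^ l * q ^ (l * m)) * q ^ m"
      using I(2) by (intro mult_le_mono[OF IH[OF I'] power_increasing[OF _ q]]) auto
    finally have "g I' * q ^ l * q ^ card I \<le> ?B" by (simp add: power_add algebra_simps)
    then have "card (I - I') * (g I' * q ^ l * q ^ card I) \<le> card I * ?B"
      by (rule mult_le_mono[OF card_mono[OF I(1) Diff_subset]])
    then show ?thesis by simp
  qed
  have "card I \<le> m + 1" using I(2) by simp
  then have "2 ^ card I * card I \<le> (2::nat) ^ (m + 1) * (m + 1)" by (intro mult_le_mono power_increasing) auto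
  moreover have "?K = 2 ^ (m + 1) * (m + 1) + 2 ^ (m + 1)" by (simp add: algebra_simps)
  moreover have "(1::nat) \<le> 2 ^ (m + 1)" by simp
  ultimately have K: "(1 + 2 ^ card I * card I) * ?B \<le> ?K * ?B" by (intro mult_le_mono1) linarith
  have "x * q ^ card I \<le> (g I * a + (\<Sum>I'\<in>Pow I. \<Sum>i\<in>I - I'. g I' * q ^ l)) * q ^ card I"
    using x by (rule mult_le_mono1)
  also have "\<dots> \<le> ?B + (\<Sum>I'\<in>Pow I. card I * ?B)"
    unfolding add_mult_distrib sum_distrib_right by (intro add_mono sum_mono old new) auto
  also have "\<dots> = (1 + 2 ^ card I * card I) * ?B" using I(1) by (simp add: card_Pow algebra_simps)
  also have "\<dots> \<le> ?K * ?B" by (rule K)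
  finally show ?thesis by (simp add: power_add algebra_simps)
qed

context field
begin

lemma meeting_tuples_Nil: "meeting_tuples R A [] I \<subseteq> (if I = {} then {[]} else {})"
  by (auto simp: meeting_tuples_def meets_def lspan_def lincomb_Nil)

lemma finite_meeting_tuples:
  assumes "finite (carrier R)" "\<forall>j\<in>set js. A j \<subseteq> vecs R N"
  shows "finite (meeting_tuples R A js I)"
proof (rule finite_subset)
  show "meeting_tuples R A js I \<subseteq> {vs. set vs \<subseteq> vecs R N \<and> length vs = length js}"
    using assms(2) by (auto simp: meeting_tuples_def list_all2_lengthD dest: list_all2_mem_set_subset)
qed (rule finite_lists_length_eq[OF finite_vecs[OF assms(1)]])

text \<open>Since \<open>B \<inter> C = 0\<close>, a point of \<open>B\<close> in the join of \<open>lspan vs\<close> and \<open>C\<close> is determined by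
  its component in \<open>lspan vs\<close>.\<close>

lemma card_join_points_le:
  assumes fin: "finite (carrier R)" and B: "lsubspace R N B" and C: "lsubspace R N C"
    and skew: "B \<inter> C = {vzero R}" and vs: "set vs \<subseteq> vecs R N"
  shows "card (join_points R B C vs) \<le> card (carrier R) ^ length vs"
proof -
  let ?X = "join_points R B C vs"
  let ?f = "\<lambda>x. SOME u. u \<in> lspan R vs \<and> (\<exists>c\<in>C. x = vadd R u c)"
  have f: "?f x \<in> lspan R vs \<and> (\<exists>c\<in>C. x = vadd R (?f x) c)" if "x \<in> ?X" for x
  proof -
    have "\<exists>u. u \<in> lspan R vs \<and> (\<exists>c\<in>C. x = vadd R u c)" using that unfolding join_points_def by blast
    then show ?thesis by (rule someI_ex)
  qed
  have "inj_on ?f ?X"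
  proof (rule inj_onI)
    fix x y assume x: "x \<in> ?X" and y: "y \<in> ?X" and fxy: "?f x = ?f y"
    define u where "u = ?f x"
    obtain a where a: "a \<in> C" "x = vadd R u a" using f[OF x] unfolding u_def by blast
    obtain b where b: "b \<in> C" "y = vadd R u b" using f[OF y] fxy unfolding u_def by auto
    have u: "u \<in> vecs R N" using f[OF x] lspan_vecs[OF vs] unfolding u_def by blast
    have ab: "a \<in> vecs R N" "b \<in> vecs R N" using a(1) b(1) lsubspace_vecs[OF C] by blast+
    have xy: "x \<in> B" "y \<in> B" using x y unfolding join_points_def by blast+
    let ?z = "vadd R x (vsmult R (\<ominus> \<one>) y)"
    have "?z = vadd R a (vsmult R (\<ominus> \<one>) b)"
      unfolding a(2) b(2) vadd_def vsmult_def
      using vecs_carrier[OF u] vecs_carrier[OF ab(1)] vecs_carrier[OF ab(2)] by (intro ext) algebra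
    then have "?z \<in> C" using C a(1) b(1) unfolding lsubspace_def by simp
    moreover have "?z \<in> B" using B xy unfolding lsubspace_def by simp
    ultimately have "?z = vzero R" using skew by blast
    then show "x = y" using xy lsubspace_vecs[OF B] vecs_eq_if_diff_zero[of x N y] by blast
  qed
  moreover have "?f ` ?X \<subseteq> lspan R vs" using f by auto
  ultimately have "card ?X \<le> card (lspan R vs)" using card_inj_on_le finite_lspan[OF fin vs] by blast
  then show ?thesis using card_lspan_le[OF fin vs] by linarith
qed

lemma join_if_meets_snoc:
  assumes C: "lsubspace R N C" and vs: "set vs \<subseteq> vecs R N" and x: "x \<in> vecs R N"
    and meets_snoc: "meets R (lspan R (vs @ [x])) C" and not_meets: "\<not> meets R (lspan R vs) C"
  shows "\<exists>u\<in>lspan R vs. \<exists>c\<in>C. x = vadd R u c"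
proof -
  obtain w where w: "w \<in> lspan R (vs @ [x])" "w \<in> C" "w \<noteq> vzero R"
    using meets_snoc unfolding meets_def by auto
  obtain u a where u: "u \<in> lspan R vs" and a: "a \<in> carrier R" and w_eq: "w = vadd R u (vsmult R a x)"
    by (rule lspan_snocE[OF vs x w(1)])
  have "a \<noteq> \<zero>"
  proof
    assume "a = \<zero>"
    then have "w = u" using w_eq vadd_vsmult_zero[OF _ x] u lspan_vecs[OF vs] by auto
    then show False using not_meets w u unfolding meets_def by auto
  qed
  then show ?thesis using mem_join_if_combination[OF lsubspace_lspan[OF vs] C u x a] w w_eq by simp
qed

lemma meeting_tuples_snoc_subset:
  assumes Aj: "A j \<subseteq> vecs R N" and As: "\<forall>j\<in>set js. A j \<subseteq> vecs R N" and I: "\<forall>i\<in>I. lsubspace R N (A i)"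
  shows "meeting_tuples R A (js @ [j]) I \<subseteq>
    (\<lambda>(vs, x). vs @ [x]) ` (meeting_tuples R A js I \<times> A j) \<union>
    (\<Union>I'\<in>Pow I. \<Union>i\<in>I - I'.
       (\<lambda>(vs, x). vs @ [x]) ` (SIGMA vs:meeting_tuples R A js I'. join_points R (A j) (A i) vs))"
    (is "_ \<subseteq> ?old \<union> ?new")
proof
  fix v assume "v \<in> meeting_tuples R A (js @ [j]) I"
  then obtain vs x where v: "v = vs @ [x]" and vs: "list_all2 (\<lambda>v j. v \<in> A j) vs js" and x: "x \<in> A j"
    and meets_v: "\<forall>i\<in>I. meets R (lspan R v) (A i)"
    unfolding meeting_tuples_def by (auto simp: list_all2_append2 list_all2_Cons2)
  have vs_vecs: "set vs \<subseteq> vecs R N" using list_all2_mem_set_subset[OF vs As] .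
  define I' where "I' = {i\<in>I. meets R (lspan R vs) (A i)}"
  have I': "I' \<in> Pow I" unfolding I'_def by blast
  have vs_I': "vs \<in> meeting_tuples R A js I'" unfolding meeting_tuples_def I'_def using vs by auto
  show "v \<in> ?old \<union> ?new"
  proof (cases "I' = I")
    case True
    have "(vs, x) \<in> meeting_tuples R A js I \<times> A j" using vs_I' True x by simp
    then have "v \<in> ?old" unfolding v by (rule rev_image_eqI) simp
    then show ?thesis ..
  next
    case False
    then obtain i where i: "i \<in> I - I'" unfolding I'_def by auto
    then have "\<exists>u\<in>lspan R vs. \<exists>c\<in>A i. x = vadd R u c"
      using join_if_meets_snoc[OF _ vs_vecs] I x Aj meets_v unfolding v I'_def by blast
    then have "(vs, x) \<in> (SIGMA vs:meeting_tuples R A js I'. join_points R (A j) (A i) vs)"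
      using vs_I' x unfolding join_points_def by blast
    then have "v \<in> (\<lambda>(vs, x). vs @ [x]) ` (SIGMA vs:meeting_tuples R A js I'. join_points R (A j) (A i) vs)"
      unfolding v by (rule rev_image_eqI) simp
    then have "v \<in> ?new" using I' i by blast
    then show ?thesis ..
  qed
qed

lemma card_meeting_tuples_snoc_le:
  assumes fin: "finite (carrier R)" and Aj: "lsubspace R N (A j)" and As: "\<forall>j\<in>set js. A j \<subseteq> vecs R N"
    and I: "\<forall>i\<in>I. lsubspace R N (A i)" "finite I" and skew: "\<forall>i\<in>I. A j \<inter> A i = {vzero R}"
  shows "card (meeting_tuples R A (js @ [j]) I)
    \<le> card (meeting_tuples R A js I) * card (A j) +
      (\<Sum>I'\<in>Pow I. \<Sum>i\<in>I - I'. card (meeting_tuples R A js I') * card (carrier R) ^ length js)"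
proof -
  let ?snoc = "\<lambda>(vs, x). vs @ [x :: nat \<Rightarrow> 'a]"
  let ?old = "?snoc ` (meeting_tuples R A js I \<times> A j)"
  let ?new = "\<lambda>I' i. ?snoc ` (SIGMA vs:meeting_tuples R A js I'. join_points R (A j) (A i) vs)"
  have Aj_vecs: "A j \<subseteq> vecs R N" using Aj by (rule lsubspace_vecs)
  then have Aj_fin: "finite (A j)" using finite_vecs[OF fin] finite_subset by auto
  have G_fin: "finite (meeting_tuples R A js I')" for I' using finite_meeting_tuples[OF fin As] .
  have old: "card ?old \<le> card (meeting_tuples R A js I) * card (A j)"
    using G_fin Aj_fin by (intro card_image_Sigma_le) auto
  have new: "card (?new I' i) \<le> card (meeting_tuples R A js I') * card (carrier R) ^ length js"
    if i: "i \<in> I" for I' i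
  proof (intro card_image_Sigma_le ballI conjI)
    fix vs assume "vs \<in> meeting_tuples R A js I'"
    then have "set vs \<subseteq> vecs R N" "length vs = length js"
      using As list_all2_mem_set_subset[of A vs js] list_all2_lengthD unfolding meeting_tuples_def by auto
    then show "card (join_points R (A j) (A i) vs) \<le> card (carrier R) ^ length js"
      using card_join_points_le[OF fin Aj _ _, of "A i" vs] I skew i by auto
    show "finite (join_points R (A j) (A i) vs)" using Aj_fin unfolding join_points_def by auto
  qed (rule G_fin)
  have "card (meeting_tuples R A (js @ [j]) I) \<le> card (?old \<union> (\<Union>I'\<in>Pow I. \<Union>i\<in>I - I'. ?new I' i))"
    using meeting_tuples_snoc_subset[OF Aj_vecs As I(1)] G_fin Aj_fin I(2)
    by (intro card_mono) (auto simp: join_points_def)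
  also have "\<dots> \<le> card ?old + (\<Sum>I'\<in>Pow I. \<Sum>i\<in>I - I'. card (?new I' i))"
    using I(2)
    by (intro order_trans[OF card_Un_le] add_left_mono order_trans[OF card_UN_le] sum_mono card_UN_le) auto
  also have "\<dots> \<le> card (meeting_tuples R A js I) * card (A j) +
      (\<Sum>I'\<in>Pow I. \<Sum>i\<in>I - I'. card (meeting_tuples R A js I') * card (carrier R) ^ length js)"
    using old new by (intro add_mono sum_mono) auto
  finally show ?thesis .
qed

lemma card_meeting_tuples_le:
  assumes fin: "finite (carrier R)"
  shows "\<lbrakk>\<forall>j\<in>set js. lsubspace R N (A j) \<and> card (A j) \<le> card (carrier R) ^ m;
          \<forall>i\<in>I. lsubspace R N (A i); \<forall>j\<in>set js. \<forall>i\<in>I. A j \<inter> A i = {vzero R};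
          finite I; length js + card I \<le> m + 1\<rbrakk> \<Longrightarrow>
   card (meeting_tuples R A js I) * card (carrier R) ^ card I
     \<le> (2 ^ (m + 1) * (m + 2)) ^ length js * card (carrier R) ^ (length js * m)"
proof (induction js arbitrary: I rule: rev_induct)
  case Nil
  show ?case
  proof (cases "I = {}")
    case True
    then have "card (meeting_tuples R A [] I) \<le> card {[] :: (nat \<Rightarrow> 'a) list}"
      using meeting_tuples_Nil[of A I] by (intro card_mono) auto
    then show ?thesis using True by simp
  qed (use meeting_tuples_Nil[of A I] in auto)
next
  case (snoc j js)
  let ?q = "card (carrier R)" and ?K = "(2::nat) ^ (m + 1) * (m + 2)"
  have IH: "card (meeting_tuples R A js I') * ?q ^ card I' \<le> ?K ^ length js * ?q ^ (length js * m)"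
    if "I' \<subseteq> I" for I'
  proof (rule snoc.IH)
    show "\<forall>j\<in>set js. lsubspace R N (A j) \<and> card (A j) \<le> ?q ^ m" using snoc.prems(1) by simp
    show "\<forall>i\<in>I'. lsubspace R N (A i)" using snoc.prems(2) that by blast
    show "\<forall>j\<in>set js. \<forall>i\<in>I'. A j \<inter> A i = {vzero R}" using snoc.prems(3) that by (simp add: subset_iff)
    show "finite I'" using finite_subset[OF that snoc.prems(4)] .
    have "card I' \<le> card I" using that snoc.prems(4) card_mono by auto
    then show "length js + card I' \<le> m + 1" using snoc.prems(5) by simp
  qed
  have step: "card (meeting_tuples R A (js @ [j]) I)
      \<le> card (meeting_tuples R A js I) * card (A j) +
         (\<Sum>I'\<in>Pow I. \<Sum>i\<in>I - I'. card (meeting_tuples R A js I') * ?q ^ length js)"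
    using snoc.prems lsubspace_vecs by (intro card_meeting_tuples_snoc_le[OF fin]) auto
  have "card (meeting_tuples R A (js @ [j]) I) * ?q ^ card I
      \<le> ?K ^ (length js + 1) * ?q ^ ((length js + 1) * m)"
    by (rule count_step_arith[OF snoc.prems(4) _ _ _ IH step])
      (use snoc.prems(1,5) fin carrier_not_empty in \<open>auto simp: Suc_le_eq card_gt_0_iff\<close>)
  then show ?case by simp
qed

end

section \<open>Saturated transversals and their fibres\<close>

definition transversal ::
    "('a, 'm) ring_scheme \<Rightarrow> (nat \<Rightarrow> (nat \<Rightarrow> 'a) set) \<Rightarrow> nat set \<Rightarrow> (nat \<Rightarrow> 'a) set
     \<Rightarrow> nat list \<Rightarrow> (nat \<Rightarrow> 'a) list \<Rightarrow> bool" where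
  "transversal R A J S js vs \<longleftrightarrow>
     distinct js \<and> set js \<subseteq> J \<and> list_all2 (\<lambda>v j. v \<in> S \<inter> A j) vs js \<and> lin_indep R vs"

definition saturated_transversal ::
    "('a, 'm) ring_scheme \<Rightarrow> (nat \<Rightarrow> (nat \<Rightarrow> 'a) set) \<Rightarrow> nat set \<Rightarrow> (nat \<Rightarrow> 'a) set
     \<Rightarrow> nat list \<Rightarrow> (nat \<Rightarrow> 'a) list \<Rightarrow> bool" where
  "saturated_transversal R A J S js vs \<longleftrightarrow>
     transversal R A J S js vs \<and> (\<forall>i\<in>J - set js. meets R (lspan R vs) (A i))"

definition fibre ::
    "('a, 'm) ring_scheme \<Rightarrow> (nat \<Rightarrow> 'a) set \<Rightarrow> nat \<Rightarrow> (nat \<Rightarrow> 'a) list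
     \<Rightarrow> ((nat \<Rightarrow> 'a) list \<times> (nat \<Rightarrow> 'a) list) set" where
  "fibre R S d vs = (\<lambda>(c, ws). (rescale R c vs, ws)) `
     (PiE {..<length vs} (\<lambda>_. carrier R - {\<zero>\<^bsub>R\<^esub>}) \<times> {ws. length ws = d \<and> set ws \<subseteq> S \<and> lin_indep R (vs @ ws)})"

lemma card_mult_le_card_if_fibres:
  assumes T: "finite T" and fibres: "\<forall>S\<in>Ss. F S \<subseteq> T \<and> L \<le> card (F S)"
    and label: "\<forall>S\<in>Ss. \<forall>x\<in>F S. g x = S"
  shows "card Ss * L \<le> card T"
proof (cases "finite Ss")
  case True
  have "card Ss * L = (\<Sum>S\<in>Ss. L)" by simp
  also have "\<dots> \<le> (\<Sum>S\<in>Ss. card (F S))" using fibres by (intro sum_mono) blast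
  also have "\<dots> = card (\<Union>S\<in>Ss. F S)"
  proof (rule card_UN_disjoint[symmetric])
    show "\<forall>S\<in>Ss. finite (F S)" using fibres T finite_subset by blast
    show "\<forall>S\<in>Ss. \<forall>S'\<in>Ss. S \<noteq> S' \<longrightarrow> F S \<inter> F S' = {}"
    proof (intro ballI impI equals0I)
      fix S S' x assume S: "S \<in> Ss" and S': "S' \<in> Ss" and "S \<noteq> S'" and x: "x \<in> F S \<inter> F S'"
      have "g x = S" using label S x by blast
      moreover have "g x = S'" using label S' x by blast
      ultimately show False using \<open>S \<noteq> S'\<close> by simp
    qed
  qed (rule True)
  also have "\<dots> \<le> card T" using fibres T by (intro card_mono) auto
  finally show ?thesis .
qed simp

context field
begin

lemma transversal_length_le: "finite J \<Longrightarrow> transversal R A J S js vs \<Longrightarrow> length js \<le> card J"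
  unfolding transversal_def by (metis card_mono distinct_card)

lemma transversal_Nil: "transversal R A J S [] []"
  unfolding transversal_def lin_indep_def by simp

lemma transversal_snoc:
  assumes tr: "transversal R A J S js vs" and S: "S \<subseteq> vecs R N"
    and i: "i \<in> J - set js" and x: "x \<in> S \<inter> A i" "x \<notin> lspan R vs"
  shows "transversal R A J S (js @ [i]) (vs @ [x])"
proof -
  have "set vs \<subseteq> S" using tr list_all2_mem_set_subset[of "\<lambda>j. S \<inter> A j" vs js S]
    unfolding transversal_def by auto
  then have "lin_indep R (vs @ [x])" using tr S x by (intro lin_indep_snoc) (auto simp: transversal_def)
  then show ?thesis using tr i x by (auto simp: transversal_def list_all2_appendI)
qed

text \<open>A longest transversal is saturated.\<close>

lemma ex_saturated_transversal:
  assumes J: "finite J" and S: "S \<subseteq> vecs R N" and meets: "\<forall>i\<in>J. meets R S (A i)"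
  shows "\<exists>js vs. saturated_transversal R A J S js vs"
proof -
  let ?P = "\<lambda>l. \<exists>js vs. transversal R A J S js vs \<and> length js = l"
  obtain l where "?P l" and l_max: "\<forall>l'. ?P l' \<longrightarrow> l' \<le> l"
    using Nat.ex_has_greatest_nat[of ?P 0 "card J"] transversal_Nil transversal_length_le[OF J] by blast
  then obtain js vs where tr: "transversal R A J S js vs" and len: "length js = l" by blast
  have "meets R (lspan R vs) (A i)" if i: "i \<in> J - set js" for i
  proof -
    obtain x where x: "x \<in> S \<inter> A i" "x \<noteq> vzero R" using meets i unfolding meets_def by blast
    have "x \<in> lspan R vs"
    proof (rule ccontr)
      assume "x \<notin> lspan R vs"
      then have "?P (Suc l)" using transversal_snoc[OF tr S i x(1)] len by fastforce
      then show False using l_max by fastforce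
    qed
    then show ?thesis using x unfolding meets_def by blast
  qed
  then show ?thesis using tr unfolding saturated_transversal_def by blast
qed

lemma rescale_mem_meeting_tuples:
  assumes fin: "finite (carrier R)" and As: "\<forall>i\<in>J. lsubspace R N (A i)" and S: "S \<subseteq> vecs R N"
    and tr: "saturated_transversal R A J S js vs" and c: "\<forall>k<length vs. c k \<in> carrier R - {\<zero>}"
  shows "rescale R c vs \<in> meeting_tuples R A js (J - set js)"
proof -
  have vs: "list_all2 (\<lambda>v j. v \<in> S \<inter> A j) vs js" "lin_indep R vs" "set js \<subseteq> J"
    using tr unfolding saturated_transversal_def transversal_def by auto
  have len: "length vs = length js" using vs(1) list_all2_lengthD by blast
  have vs_vecs: "set vs \<subseteq> vecs R N" using list_all2_mem_set_subset[OF vs(1)] S by blast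
  have "list_all2 (\<lambda>v j. v \<in> A j) (rescale R c vs) js"
    unfolding list_all2_conv_all_nth
  proof (intro conjI allI impI)
    fix k assume "k < length (rescale R c vs)"
    then have k: "k < length js" using len by simp
    then have "js ! k \<in> J" "vs ! k \<in> A (js ! k)" "c k \<in> carrier R"
      using vs(1,3) c len nth_mem[OF k] unfolding list_all2_conv_all_nth by auto
    then show "rescale R c vs ! k \<in> A (js ! k)" using As k len unfolding lsubspace_def by auto
  qed (simp add: len)
  moreover have "lspan R (rescale R c vs) = lspan R vs" by (rule lspan_rescale[OF fin vs(2) vs_vecs c])
  ultimately show ?thesis using tr unfolding meeting_tuples_def saturated_transversal_def by simp
qed

lemma fibre_subset:
  assumes fin: "finite (carrier R)" and As: "\<forall>i\<in>J. lsubspace R N (A i)" and S: "S \<subseteq> vecs R N"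
    and tr: "saturated_transversal R A J S js vs"
  shows "fibre R S d vs \<subseteq> meeting_tuples R A js (J - set js) \<times> {ws. set ws \<subseteq> vecs R N \<and> length ws = d}"
  using rescale_mem_meeting_tuples[OF fin As S tr] S unfolding fibre_def by auto

lemma card_fibre_ge:
  assumes fin: "finite (carrier R)" and bs: "set bs \<subseteq> vecs R N" "lin_indep R bs"
    and vs: "set vs \<subseteq> lspan R bs" "lin_indep R vs" "length vs \<le> length bs"
  shows "(card (carrier R) - 1) ^ length vs *
           (card (carrier R) ^ length bs - card (carrier R) ^ (length bs - 1)) ^ (length bs - length vs)
         \<le> card (fibre R (lspan R bs) (length bs - length vs) vs)"
proof -
  have vs_vecs: "set vs \<subseteq> vecs R N" using vs(1) lspan_vecs[OF bs(1)] by blast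
  have "inj_on (\<lambda>(c, ws). (rescale R c vs, ws))
          (PiE {..<length vs} (\<lambda>_. carrier R - {\<zero>}) \<times>
           {ws. length ws = length bs - length vs \<and> set ws \<subseteq> lspan R bs \<and> lin_indep R (vs @ ws)})"
    using inj_on_rescale[OF vs(2) vs_vecs] by (auto simp: inj_on_def)
  then show ?thesis
    using card_lin_indep_extensions_ge[OF fin bs vs(1,2), of "length bs - length vs"] vs(3)
    by (simp add: fibre_def card_image card_cartesian_product card_PiE card_Diff_singleton_if)
qed

lemma lspan_fibre:
  assumes fin: "finite (carrier R)" and bs: "set bs \<subseteq> vecs R N" "lin_indep R bs"
    and vs: "set vs \<subseteq> lspan R bs" "length vs \<le> length bs"
    and p: "p \<in> fibre R (lspan R bs) (length bs - length vs) vs"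
  shows "lspan R (fst p @ snd p) = lspan R bs"
proof -
  obtain c ws where p_eq: "p = (rescale R c vs, ws)" and c: "c \<in> PiE {..<length vs} (\<lambda>_. carrier R - {\<zero>})"
    and ws: "length ws = length bs - length vs" "set ws \<subseteq> lspan R bs" "lin_indep R (vs @ ws)"
    using p unfolding fibre_def by auto
  have "set (vs @ ws) \<subseteq> lspan R bs" "length (vs @ ws) = length bs" using vs ws by auto
  moreover have "\<forall>k<length vs. c k \<in> carrier R - {\<zero>}" using c by auto
  ultimately show ?thesis using lspan_rescale_append[OF fin bs _ ws(3)] p_eq by simp
qed

text \<open>Double counting: the fibres of distinct \<open>S\<close> are disjoint, since every pair in the fibre of \<open>S\<close>
  spans \<open>S\<close>.\<close>

lemma card_subspaces_with_transversal_le: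
  assumes fin: "finite (carrier R)" and J: "finite J" and As: "\<forall>i\<in>J. lsubspace R N (A i)"
    and js: "set js \<subseteq> J"
    and bases: "\<forall>S\<in>Ss. \<exists>bs. set bs \<subseteq> vecs R N \<and> lin_indep R bs \<and> length bs = card J \<and> S = lspan R bs"
    and tr: "\<forall>S\<in>Ss. saturated_transversal R A J S js (vsel S)"
  shows "card Ss * ((card (carrier R) - 1) ^ length js *
            (card (carrier R) ^ card J - card (carrier R) ^ (card J - 1)) ^ (card J - length js))
         \<le> card (meeting_tuples R A js (J - set js)) * card (carrier R) ^ (N * (card J - length js))"
proof -
  let ?q = "card (carrier R)" and ?d = "card J - length js"
  let ?T = "meeting_tuples R A js (J - set js) \<times> {ws. set ws \<subseteq> vecs R N \<and> length ws = ?d}"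
  have "\<forall>j\<in>set js. A j \<subseteq> vecs R N" using As js lsubspace_vecs by blast
  then have T_fin: "finite ?T"
    using finite_meeting_tuples[OF fin] finite_lists_length_eq[OF finite_vecs[OF fin]] by simp
  have S_fibre: "fibre R S ?d (vsel S) \<subseteq> ?T \<and>
      (?q - 1) ^ length js * (?q ^ card J - ?q ^ (card J - 1)) ^ ?d \<le> card (fibre R S ?d (vsel S)) \<and>
      (\<forall>p\<in>fibre R S ?d (vsel S). lspan R (fst p @ snd p) = S)" if S: "S \<in> Ss" for S
  proof -
    obtain bs where bs: "set bs \<subseteq> vecs R N" "lin_indep R bs" "length bs = card J" "S = lspan R bs"
      using bases S by blast
    have trS: "saturated_transversal R A J S js (vsel S)" using tr S by blast
    then have vs: "list_all2 (\<lambda>v j. v \<in> S \<inter> A j) (vsel S) js" "lin_indep R (vsel S)"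
      and len_js: "length js \<le> card J"
      using transversal_length_le[OF J] unfolding saturated_transversal_def transversal_def by auto
    have len: "length (vsel S) = length js" using vs(1) list_all2_lengthD by blast
    have vs_S: "set (vsel S) \<subseteq> lspan R bs" using list_all2_mem_set_subset[OF vs(1)] bs(4) by blast
    have S_vecs: "S \<subseteq> vecs R N" using bs lspan_vecs by blast
    show ?thesis
      using fibre_subset[OF fin As S_vecs trS, of ?d] card_fibre_ge[OF fin bs(1,2) vs_S vs(2)]
        lspan_fibre[OF fin bs(1,2) vs_S] len len_js bs(3,4) by simp
  qed
  have "card Ss * ((?q - 1) ^ length js * (?q ^ card J - ?q ^ (card J - 1)) ^ ?d) \<le> card ?T"
    using S_fibre
    by (intro card_mult_le_card_if_fibres[OF T_fin, of Ss "\<lambda>S. fibre R S ?d (vsel S)" _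
          "\<lambda>p. lspan R (fst p @ snd p)"]) auto
  also have "\<dots> = card (meeting_tuples R A js (J - set js)) * card (vecs R N) ^ ?d"
    by (simp add: card_cartesian_product card_lists_length_eq[OF finite_vecs[OF fin]])
  also have "\<dots> \<le> card (meeting_tuples R A js (J - set js)) * (?q ^ N) ^ ?d"
    by (intro mult_le_mono2 power_mono card_vecs_le[OF fin]) simp
  also have "\<dots> = card (meeting_tuples R A js (J - set js)) * ?q ^ (N * ?d)"
    by (simp add: power_mult)
  finally show ?thesis .
qed

end

section \<open>Counting the n-spaces of PG(2n, q)\<close>

lemma fibre_count_arith:
  fixes q t n c G K :: nat
  assumes q: "q \<ge> 2" and t: "t \<le> n + 1" and n: "n \<ge> 1" and K: "K \<ge> 1"
    and fibres: "c * ((q - 1) ^ t * (q ^ (n + 1) - q ^ n) ^ (n + 1 - t)) \<le> G * q ^ ((2 * n + 1) * (n + 1 - t))"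
    and tuples: "G * q ^ (n + 1 - t) \<le> K ^ t * q ^ (t * n)"
  shows "c \<le> 2 ^ (n + 1) * K ^ (n + 1) * q ^ (n\<^sup>2 - 1)"
proof -
  define d where "d = n + 1 - t"
  have td: "t + d = n + 1" using t unfolding d_def by simp
  define E where "E = t + (n + 1) * d + d"
  have exponents: "t * n + (2 * n + 1) * d = E + (n\<^sup>2 - 1)"
  proof -
    have "t * n + d * n = n * n + n" using td by (metis add_mult_distrib mult_Suc Suc_eq_plus1 add.commute)
    then have "t * n + (2 * n + 1) * d + 1 = E + n\<^sup>2"
      unfolding E_def using td by (simp add: algebra_simps power2_eq_square)
    then show ?thesis using n by (simp add: power2_eq_square)
  qed
  have "q \<le> 2 * (q - 1)" using q by simp
  then have pt: "q ^ t \<le> 2 ^ t * (q - 1) ^ t" by (metis power_mono power_mult_distrib zero_le)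
  have "2 * q ^ n \<le> q * q ^ n" using q by simp
  then have "q ^ (n + 1) \<le> 2 * (q ^ (n + 1) - q ^ n)" unfolding Suc_eq_plus1[symmetric] power_Suc by linarith
  then have pd: "q ^ ((n + 1) * d) \<le> 2 ^ d * (q ^ (n + 1) - q ^ n) ^ d"
    by (metis power_mono power_mult power_mult_distrib zero_le)
  have "c * q ^ E = c * (q ^ t * q ^ ((n + 1) * d) * q ^ d)" unfolding E_def by (simp add: power_add)
  also have "\<dots> \<le> c * ((2 ^ t * (q - 1) ^ t) * (2 ^ d * (q ^ (n + 1) - q ^ n) ^ d) * q ^ d)"
    using pt pd by (intro mult_le_mono2 mult_le_mono1 mult_le_mono) auto
  also have "\<dots> = 2 ^ (t + d) * ((c * ((q - 1) ^ t * (q ^ (n + 1) - q ^ n) ^ d)) * q ^ d)"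
    by (simp add: power_add algebra_simps)
  also have "\<dots> \<le> 2 ^ (t + d) * ((G * q ^ ((2 * n + 1) * d)) * q ^ d)"
    using fibres unfolding d_def by (intro mult_le_mono2 mult_le_mono1)
  also have "\<dots> = 2 ^ (t + d) * ((G * q ^ d) * q ^ ((2 * n + 1) * d))" by (simp add: algebra_simps)
  also have "\<dots> \<le> 2 ^ (t + d) * ((K ^ t * q ^ (t * n)) * q ^ ((2 * n + 1) * d))"
    using tuples unfolding d_def by (intro mult_le_mono2 mult_le_mono1)
  also have "\<dots> = (2 ^ (n + 1) * K ^ t * q ^ (n\<^sup>2 - 1)) * q ^ E"
    using exponents td by (simp add: power_add[symmetric] algebra_simps)
  finally have "c \<le> 2 ^ (n + 1) * K ^ t * q ^ (n\<^sup>2 - 1)" using q by simp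
  also have "\<dots> \<le> 2 ^ (n + 1) * K ^ (n + 1) * q ^ (n\<^sup>2 - 1)" using power_increasing[OF t K] by simp
  finally show ?thesis .
qed

context field
begin

lemma two_le_card_carrier: "finite (carrier R) \<Longrightarrow> card (carrier R) \<ge> 2"
  using card_mono[of "carrier R" "{\<zero>, \<one>}"] by simp

lemma subspace_dimE:
  assumes "subspace_dim R N d W"
  obtains bs where "lsubspace R N W" "set bs \<subseteq> vecs R N" "lin_indep R bs" "length bs = d" "W = lspan R bs"
proof -
  obtain bs where W: "lsubspace R N W" and bs: "length bs = d" "set bs \<subseteq> W" "lin_indep R bs" "W = lspan R bs"
    using assms unfolding subspace_dim_def lspan_def by auto
  show thesis using lsubspace_vecs[OF W] W bs by (intro that[of bs]) auto
qed

lemma card_subspace_dim: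
  assumes "finite (carrier R)" "subspace_dim R N d W"
  shows "card W = card (carrier R) ^ d"
proof -
  obtain bs where "set bs \<subseteq> vecs R N" "lin_indep R bs" "length bs = d" "W = lspan R bs"
    using assms(2) by (rule subspace_dimE)
  then show ?thesis using card_lspan_lin_indep[OF assms(1)] by simp
qed

lemma proj_space_basis:
  assumes "proj_space R m i S"
  shows "\<exists>bs. set bs \<subseteq> vecs R (Suc m) \<and> lin_indep R bs \<and> length bs = Suc i \<and> S = lspan R bs"
proof -
  obtain bs where "set bs \<subseteq> vecs R (Suc m)" "lin_indep R bs" "length bs = Suc i" "S = lspan R bs"
    using assms unfolding proj_space_def by (rule subspace_dimE)
  then show ?thesis by blast
qed

lemma card_n_spaces_with_transversal_le:
  assumes fin: "finite (carrier R)" and n: "n \<ge> 2"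
    and A: "\<forall>i\<in>{1..n+1}. proj_space R (2 * n) (n - 1) (A i)"
    and skew: "\<forall>i\<in>{1..n+1}. \<forall>j\<in>{1..n+1}. i \<noteq> j \<longrightarrow> skew R (A i) (A j)"
    and js: "distinct js" "set js \<subseteq> {1..n+1}"
    and Ss: "\<forall>S\<in>Ss. proj_space R (2 * n) n S \<and> saturated_transversal R A {1..n+1} S js (vsel S)"
  shows "card Ss \<le> 2 ^ (n + 1) * (2 ^ (n + 1) * (n + 2)) ^ (n + 1) * card (carrier R) ^ (n\<^sup>2 - 1)"
proof -
  let ?q = "card (carrier R)" and ?J = "{1..n+1}" and ?N = "2 * n + 1"
  have A_dim: "subspace_dim R ?N n (A i)" if "i \<in> ?J" for i
    using A that n unfolding proj_space_def by (simp add: Suc_diff_le)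
  have A_sub: "\<forall>i\<in>?J. lsubspace R ?N (A i)" using A_dim unfolding subspace_dim_def by blast
  have len: "length js \<le> n + 1"
    using distinct_card[OF js(1)] card_mono[OF finite_atLeastAtMost js(2)] by simp
  have card_I: "card (?J - set js) = n + 1 - length js"
    using card_Diff_subset[OF finite_set js(2)] distinct_card[OF js(1)] by simp
  have bases: "\<forall>S\<in>Ss. \<exists>bs. set bs \<subseteq> vecs R ?N \<and> lin_indep R bs \<and> length bs = card ?J \<and> S = lspan R bs"
    using Ss proj_space_basis by simp
  have fibres: "card Ss * ((?q - 1) ^ length js * (?q ^ (n + 1) - ?q ^ n) ^ (n + 1 - length js))
      \<le> card (meeting_tuples R A js (?J - set js)) * ?q ^ (?N * (n + 1 - length js))"
    using card_subspaces_with_transversal_le[OF fin _ A_sub js(2) bases, of vsel] Ss by simp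
  have "card (meeting_tuples R A js (?J - set js)) * ?q ^ card (?J - set js)
      \<le> (2 ^ (n + 1) * (n + 2)) ^ length js * ?q ^ (length js * n)"
  proof (rule card_meeting_tuples_le[OF fin])
    show "\<forall>j\<in>set js. lsubspace R ?N (A j) \<and> card (A j) \<le> ?q ^ n"
    proof
      fix j assume "j \<in> set js"
      then have j: "j \<in> ?J" using js(2) by blast
      then show "lsubspace R ?N (A j) \<and> card (A j) \<le> ?q ^ n"
        using A_sub card_subspace_dim[OF fin A_dim[OF j]] by simp
    qed
    show "\<forall>j\<in>set js. \<forall>i\<in>?J - set js. A j \<inter> A i = {vzero R}"
    proof (intro ballI)
      fix j i assume "j \<in> set js" "i \<in> ?J - set js"
      then have "j \<in> ?J" "i \<in> ?J" "j \<noteq> i" using js(2) by auto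
      then show "A j \<inter> A i = {vzero R}" using skew unfolding skew_def by simp
    qed
    show "length js + card (?J - set js) \<le> n + 1" using card_I len by simp
  qed (use A_sub in auto)
  then have tuples: "card (meeting_tuples R A js (?J - set js)) * ?q ^ (n + 1 - length js)
      \<le> (2 ^ (n + 1) * (n + 2)) ^ length js * ?q ^ (length js * n)"
    by (simp only: card_I)
  show ?thesis
    by (rule fibre_count_arith[OF two_le_card_carrier[OF fin] len _ _ fibres tuples]) (use n in \<open>auto simp: Suc_le_eq\<close>)
qed

lemma card_n_spaces_meeting_all_le:
  assumes fin: "finite (carrier R)" and n: "n \<ge> 2"
    and A: "\<forall>i\<in>{1..n+1}. proj_space R (2 * n) (n - 1) (A i)"
    and skew: "\<forall>i\<in>{1..n+1}. \<forall>j\<in>{1..n+1}. i \<noteq> j \<longrightarrow> skew R (A i) (A j)"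
  shows "card {S. proj_space R (2 * n) n S \<and> (\<forall>i\<in>{1..n+1}. meets R S (A i))}
    \<le> card {js. distinct js \<and> set js \<subseteq> {1..n+1}} *
       (2 ^ (n + 1) * (2 ^ (n + 1) * (n + 2)) ^ (n + 1) * card (carrier R) ^ (n\<^sup>2 - 1))"
proof -
  let ?J = "{1..n+1}" and ?N = "2 * n + 1"
  let ?Ss = "{S. proj_space R (2 * n) n S \<and> (\<forall>i\<in>?J. meets R S (A i))}"
  let ?DL = "{js. distinct js \<and> set js \<subseteq> ?J}"
  define sel where "sel S = (SOME p. saturated_transversal R A ?J S (fst p) (snd p))" for S
  have sel: "saturated_transversal R A ?J S (fst (sel S)) (snd (sel S))" if S: "S \<in> ?Ss" for S
  proof -
    have "S \<subseteq> vecs R ?N" using S proj_space_basis[of "2 * n" n S] lspan_vecs by auto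
    then have "\<exists>js vs. saturated_transversal R A ?J S js vs"
      using S by (intro ex_saturated_transversal) auto
    then have "\<exists>p. saturated_transversal R A ?J S (fst p) (snd p)" by simp
    then show ?thesis unfolding sel_def by (rule someI_ex)
  qed
  have DL_fin: "finite ?DL"
    by (rule finite_subset[OF _ finite_subset_distinct[OF finite_atLeastAtMost]]) auto
  have "?Ss = (\<Union>js\<in>?DL. {S \<in> ?Ss. fst (sel S) = js})"
    using sel unfolding saturated_transversal_def transversal_def by blast
  then have "card ?Ss = card (\<Union>js\<in>?DL. {S \<in> ?Ss. fst (sel S) = js})" by (rule arg_cong)
  also have "\<dots> \<le> (\<Sum>js\<in>?DL. card {S \<in> ?Ss. fst (sel S) = js})" by (rule card_UN_le[OF DL_fin])
  also have "\<dots> \<le> (\<Sum>js\<in>?DL. 2 ^ (n + 1) * (2 ^ (n + 1) * (n + 2)) ^ (n + 1) * card (carrier R) ^ (n\<^sup>2 - 1))"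
  proof (rule sum_mono)
    fix js assume "js \<in> ?DL"
    then show "card {S \<in> ?Ss. fst (sel S) = js} \<le> 2 ^ (n + 1) * (2 ^ (n + 1) * (n + 2)) ^ (n + 1) * card (carrier R) ^ (n\<^sup>2 - 1)"
      using sel by (intro card_n_spaces_with_transversal_le[OF fin n A skew, of js _ "\<lambda>S. snd (sel S)"]) auto
  qed
  finally show ?thesis by simp
qed

end

theorem mainTheorem9:
  fixes n :: nat
  assumes "n \<ge> 2"
  shows "\<exists>C::real. \<forall>(R::nat ring) (A::nat \<Rightarrow> (nat \<Rightarrow> nat) set).
     field R \<and> finite (carrier R) \<and>
     (\<forall>i\<in>{1..n+1}. proj_space R (2*n) (n-1) (A i)) \<and>
     (\<forall>i\<in>{1..n+1}. \<forall>j\<in>{1..n+1}. i \<noteq> j \<longrightarrow> skew R (A i) (A j)) \<longrightarrow>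
     real (card {S. proj_space R (2*n) n S \<and> (\<forall>i\<in>{1..n+1}. meets R S (A i))})
       \<le> C * real (card (carrier R)) ^ (n^2 - 1)"
proof (intro exI allI impI)
  let ?C = "card {js. distinct js \<and> set js \<subseteq> {1..n+1}} * (2 ^ (n + 1) * (2 ^ (n + 1) * (n + 2)) ^ (n + 1))"
  fix R :: "nat ring" and A :: "nat \<Rightarrow> (nat \<Rightarrow> nat) set"
  assume "field R \<and> finite (carrier R) \<and>
     (\<forall>i\<in>{1..n+1}. proj_space R (2*n) (n-1) (A i)) \<and>
     (\<forall>i\<in>{1..n+1}. \<forall>j\<in>{1..n+1}. i \<noteq> j \<longrightarrow> skew R (A i) (A j))"
  then have "card {S. proj_space R (2*n) n S \<and> (\<forall>i\<in>{1..n+1}. meets R S (A i))}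
      \<le> ?C * card (carrier R) ^ (n^2 - 1)"
    using field.card_n_spaces_meeting_all_le[of R n A] assms by (simp add: mult.assoc)
  then have "real (card {S. proj_space R (2*n) n S \<and> (\<forall>i\<in>{1..n+1}. meets R S (A i))})
      \<le> real (?C * card (carrier R) ^ (n^2 - 1))"
    by (rule of_nat_mono)
  then show "real (card {S. proj_space R (2*n) n S \<and> (\<forall>i\<in>{1..n+1}. meets R S (A i))})
      \<le> real ?C * real (card (carrier R)) ^ (n^2 - 1)"
    by (simp only: of_nat_mult of_nat_power)
qed

end
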